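(* Let $F$ be a field and let $G$ be a bipartite graph with bipartition $(X,Y)$, where $|X|=m$, $|Y|=n$ and $m\le n$. If $\mathcal{R}_F(G)\neq\emptyset$, then $$f(G\Box K_2)=m.$$
   Context: All graphs are finite and simple. For a graph $H$ with a perfect matching $M$, a subset $S\subseteq M$ is a forcing set of $M$ if $S$ is contained in no other perfect matching of $H$; $f(H,M)$ is the minimum size of a forcing set of $M$, and $f(H)$ is the minimum of $f(H,M)$ over all perfect matchings $M$ of $H$. For a bipartite graph $G$ with bipartition $(X,Y)$, a weighted bi-adjacency matrix of $G$ over $F$ is an $|X|\times|Y|$ matrix over $F$, rows indexed by $X$ and columns by $Y$, whose $(x,y)$ entry is nonzero iff $x$ and $y$ are adjacent. $\mathcal{R}_F(G)$ denotes the set of weighted bi-adjacency matrices $B$ of $G$ over $F$ (rows indexed by $X$, columns by $Y$) for which there is another weighted bi-adjacency matrix $C$ of $G$ over $F$ (rows indexed by $X$, columns by $Y$) with $BC^{\top}=I_m$; so $\mathcal{R}_F(G)\neq\emptyset$ means such a pair $B,C$ exists. $K_2$ is the complete graph on two vertices, and $G\Box H$ is the Cartesian product: vertex set $V(G)\times V(H)$, with $(g_1,h_1)\sim(g_2,h_2)$ iff either $g_1=g_2$ and $h_1h_2\in E(H)$, or $h_1=h_2$ and $g_1g_2\in E(G)$. *)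

theory Defs
  imports Main
begin

definition simple_graph :: "'a set \<Rightarrow> 'a set set \<Rightarrow> bool" where
  "simple_graph V E \<longleftrightarrow> finite V \<and>
     (\<forall>e\<in>E. \<exists>u v. e = {u, v} \<and> u \<noteq> v \<and> u \<in> V \<and> v \<in> V)"

definition perfect_matching :: "'a set \<Rightarrow> 'a set set \<Rightarrow> 'a set set \<Rightarrow> bool" where
  "perfect_matching V E M \<longleftrightarrow> M \<subseteq> E \<and> (\<forall>v\<in>V. \<exists>!e. e \<in> M \<and> v \<in> e)"

definition forcing_set :: "'a set \<Rightarrow> 'a set set \<Rightarrow> 'a set set \<Rightarrow> 'a set set \<Rightarrow> bool" where
  "forcing_set V E M S \<longleftrightarrow> S \<subseteq> M \<and>
     (\<forall>M'. perfect_matching V E M' \<and> S \<subseteq> M' \<longrightarrow> M' = M)"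

definition forcing_number :: "'a set \<Rightarrow> 'a set set \<Rightarrow> 'a set set \<Rightarrow> nat" where
  "forcing_number V E M = (LEAST k. \<exists>S. forcing_set V E M S \<and> card S = k)"

definition min_forcing_number :: "'a set \<Rightarrow> 'a set set \<Rightarrow> nat" where
  "min_forcing_number V E = Min {forcing_number V E M | M. perfect_matching V E M}"

definition cart_prod_V :: "'a set \<Rightarrow> 'b set \<Rightarrow> ('a \<times> 'b) set" where
  "cart_prod_V V1 V2 = V1 \<times> V2"

definition cart_prod_E :: "'a set \<Rightarrow> 'a set set \<Rightarrow> 'b set \<Rightarrow> 'b set set \<Rightarrow> ('a \<times> 'b) set set" where
  "cart_prod_E V1 E1 V2 E2 =
     {{(g1, h1), (g2, h2)} | g1 h1 g2 h2.
        g1 \<in> V1 \<and> g2 \<in> V1 \<and> h1 \<in> V2 \<and> h2 \<in> V2 \<and>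
        ((g1 = g2 \<and> {h1, h2} \<in> E2) \<or> (h1 = h2 \<and> {g1, g2} \<in> E1))}"

definition K2_V :: "nat set" where "K2_V = {0, 1}"
definition K2_E :: "nat set set" where "K2_E = {{0, 1}}"

definition bipartition :: "'a set \<Rightarrow> 'a set set \<Rightarrow> 'a set \<Rightarrow> 'a set \<Rightarrow> bool" where
  "bipartition V E X Y \<longleftrightarrow> X \<inter> Y = {} \<and> X \<union> Y = V \<and>
     (\<forall>e\<in>E. \<exists>x y. x \<in> X \<and> y \<in> Y \<and> e = {x, y})"

text \<open>Weighted bi-adjacency matrix of G over a field: an X-by-Y matrix, represented as
  a function on X \<times> Y (values outside X \<times> Y are irrelevant), with nonzero entries exactly
  at the edges.\<close>
definition weighted_biadj :: "'a set set \<Rightarrow> 'a set \<Rightarrow> 'a set \<Rightarrow> ('a \<Rightarrow> 'a \<Rightarrow> 'f::field) \<Rightarrow> bool" where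
  "weighted_biadj E X Y B \<longleftrightarrow> (\<forall>x\<in>X. \<forall>y\<in>Y. B x y \<noteq> 0 \<longleftrightarrow> {x, y} \<in> E)"

definition R_F :: "'a set set \<Rightarrow> 'a set \<Rightarrow> 'a set \<Rightarrow> ('a \<Rightarrow> 'a \<Rightarrow> 'f::field) set" where
  "R_F E X Y = {B. weighted_biadj E X Y B \<and>
     (\<exists>C. weighted_biadj E X Y C \<and>
        (\<forall>x\<in>X. \<forall>x'\<in>X. (\<Sum>y\<in>Y. B x y * C x' y) = (if x = x' then 1 else 0)))}"

end

theory Submission
  imports Defs
begin

text \<open>The prism G \<box> K2 is bipartite with sides X \<times> {0} \<union> Y \<times> {1} and Y \<times> {0} \<union> X \<times> {1},
  and its bi-adjacency matrix can be weighted as the block matrix [[B, I], [I, C^T]]. When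
  B C^T = I, the vectors (- C^T w, w) form an |X|-dimensional subspace of its kernel. A forcing
  set S of a perfect matching M covers at most |S| vertices of the second side, so if |S| < |X|
  some nonzero kernel vector vanishes on all of them. On the support of that vector every vertex
  has its M-partner outside the support, and the vanishing row of the partner provides a further
  neighbour inside; this yields M-alternating cycles avoiding S, contradicting that S forces M.
  Conversely, the rungs over X force the perfect matching of all rungs, since every copy of an
  edge of G meets a vertex of X.\<close>

section \<open>Switching perfect matchings along alternating cycles\<close>

lemma finite_self_map_invariant_subset:
  assumes "finite Z" "Z \<noteq> {}" "g ` Z \<subseteq> Z"
  shows "\<exists>Q\<subseteq>Z. Q \<noteq> {} \<and> g ` Q = Q"
  using assms
proof (induction "card Z" arbitrary: Z rule: less_induct)
  case less
  show ?case
  proof (cases "g ` Z = Z")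
    case True
    then show ?thesis using less.prems by blast
  next
    case False
    then have "card (g ` Z) < card Z"
      using less.prems(1,3) by (meson psubset_card_mono psubsetI)
    moreover have "finite (g ` Z)" "g ` Z \<noteq> {}" using less.prems(1,2) by simp_all
    moreover have "g ` g ` Z \<subseteq> g ` Z" using less.prems(3) by (rule image_mono)
    ultimately obtain Q where "Q \<subseteq> g ` Z" "Q \<noteq> {}" "g ` Q = Q"
      using less.hyps by meson
    moreover have "Q \<subseteq> Z" using \<open>Q \<subseteq> g ` Z\<close> less.prems(3) by (rule order_trans)
    ultimately show ?thesis by blast
  qed
qed

definition matching :: "'v set set \<Rightarrow> bool" where
  "matching N \<longleftrightarrow> (\<forall>e\<in>N. \<forall>e'\<in>N. e \<inter> e' \<noteq> {} \<longrightarrow> e = e')"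

lemma perfect_matching_unique:
  assumes "perfect_matching W E M" "v \<in> W" "e \<in> M" "e' \<in> M" "v \<in> e" "v \<in> e'"
  shows "e = e'"
  using assms unfolding perfect_matching_def by blast

lemma perfect_matching_covers:
  "perfect_matching W E M \<Longrightarrow> v \<in> W \<Longrightarrow> \<exists>e\<in>M. v \<in> e"
  unfolding perfect_matching_def by blast

lemma perfect_matching_edge: "perfect_matching W E M \<Longrightarrow> e \<in> M \<Longrightarrow> e \<in> E"
  unfolding perfect_matching_def by blast

lemma perfect_matching_exchange:
  assumes M: "perfect_matching W E M"
    and R: "R \<subseteq> M"
    and N: "N \<subseteq> E" "matching N" "\<Union>N = \<Union>R"
  shows "perfect_matching W E (M - R \<union> N)"
  unfolding perfect_matching_def
proof (intro conjI ballI)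
  show "M - R \<union> N \<subseteq> E" using M N(1) unfolding perfect_matching_def by blast
next
  fix v assume v: "v \<in> W"
  show "\<exists>!e. e \<in> M - R \<union> N \<and> v \<in> e"
  proof (cases "v \<in> \<Union>R")
    case True
    then obtain r where r: "r \<in> R" "v \<in> r" by blast
    obtain e where e: "e \<in> N" "v \<in> e" using True N(3) by blast
    have "e' = e" if "e' \<in> M - R \<union> N" "v \<in> e'" for e'
    proof -
      have "e' \<notin> M - R" using perfect_matching_unique[OF M v] r R that(2) by blast
      then show ?thesis using N(2) e that unfolding matching_def by blast
    qed
    then show ?thesis using e by blast
  next
    case False
    then have "v \<notin> \<Union>N" using N(3) by blast
    moreover obtain e where "e \<in> M" "v \<in> e"
      using perfect_matching_covers[OF M v] by blast
    ultimately show ?thesis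
      using False perfect_matching_unique[OF M v] by blast
  qed
qed

lemma forcing_set_meets_alternating_set:
  assumes M: "perfect_matching W E M" and S: "forcing_set W E M S"
    and Z: "finite Z" "Z \<noteq> {}"
    and partner: "\<And>c. c \<in> Z \<Longrightarrow> {c, p c} \<in> M" "\<And>c. c \<in> Z \<Longrightarrow> p c \<in> W - Z"
    and succ: "\<And>c. c \<in> Z \<Longrightarrow> g c \<in> Z" "\<And>c. c \<in> Z \<Longrightarrow> g c \<noteq> c"
      "\<And>c. c \<in> Z \<Longrightarrow> {p c, g c} \<in> E"
  shows "\<exists>e\<in>S. e \<inter> Z \<noteq> {}"
proof (rule ccontr)
  assume avoid: "\<not> (\<exists>e\<in>S. e \<inter> Z \<noteq> {})"
  obtain Q where Q: "Q \<subseteq> Z" "Q \<noteq> {}" "g ` Q = Q"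
    using finite_self_map_invariant_subset[OF Z, of g] succ(1) by blast
  then have QZ: "\<And>c. c \<in> Q \<Longrightarrow> c \<in> Z" by blast
  have pZ: "\<And>c. c \<in> Q \<Longrightarrow> p c \<notin> Z" using partner(2) QZ by blast
  have "inj_on g Q"
    using Q Z finite_subset by (metis eq_card_imp_inj_on)
  have "inj_on p Q"
  proof (rule inj_onI)
    fix c c' assume c: "c \<in> Q" "c' \<in> Q" "p c = p c'"
    have "p c \<in> W" using partner(2) QZ c(1) by blast
    then have "{c, p c} = {c', p c'}"
      using perfect_matching_unique[OF M _ partner(1)[OF QZ[OF c(1)]] partner(1)[OF QZ[OF c(2)]]] c(3)
      by simp
    moreover have "c \<noteq> p c" using pZ QZ c(1) by metis
    ultimately show "c = c'" using c(3) by (auto simp: doubleton_eq_iff)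
  qed
  \<comment> \<open>On Q the M-edges {c, p c} and the edges {p c, g c} form disjoint M-alternating cycles,
    along which M is switched.\<close>
  define R where "R = {{c, p c} | c. c \<in> Q}"
  define N where "N = {{p c, g c} | c. c \<in> Q}"
  have "c = c'" if c: "c \<in> Q" "c' \<in> Q" "{p c, g c} \<inter> {p c', g c'} \<noteq> {}" for c c'
  proof -
    have "p c \<noteq> g c'" "g c \<noteq> p c'" using pZ succ(1) QZ c(1,2) by metis+
    then have "p c = p c' \<or> g c = g c'" using c(3) by blast
    then show ?thesis using \<open>inj_on p Q\<close> \<open>inj_on g Q\<close> c by (meson inj_onD)
  qed
  then have "matching N" unfolding matching_def N_def by blast
  moreover have "\<Union>N = \<Union>R" using Q(3) unfolding N_def R_def by blast
  moreover have "R \<subseteq> M" "N \<subseteq> E" using partner(1) succ(3) QZ unfolding R_def N_def by blast+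
  ultimately have M': "perfect_matching W E (M - R \<union> N)"
    using perfect_matching_exchange[OF M] by blast
  have "{c, p c} \<notin> S" if "c \<in> Q" for c using avoid QZ[OF that] by auto
  then have "S \<subseteq> M - R \<union> N" using S unfolding forcing_set_def R_def by blast
  then have eq: "M - R \<union> N = M" using S M' unfolding forcing_set_def by blast
  obtain c where c: "c \<in> Q" using Q(2) by blast
  then have "{p c, g c} \<in> M" using eq unfolding N_def by blast
  moreover have "p c \<in> W" using partner(2) QZ c by blast
  ultimately have "{p c, g c} = {c, p c}"
    using perfect_matching_unique[OF M _ _ partner(1)[OF QZ[OF c]]] by simp
  moreover have "g c \<noteq> p c" using pZ succ(1) QZ c by metis
  ultimately have "g c = c" by (auto simp: doubleton_eq_iff)
  then show False using succ(2)[OF QZ[OF c]] by simp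
qed

section \<open>Kernel vectors and forcing sets\<close>

lemma bipartitionD:
  assumes "bipartition W E P1 P2"
  shows "P1 \<inter> P2 = {}" "P1 \<union> P2 = W" "\<And>e. e \<in> E \<Longrightarrow> \<exists>x\<in>P1. \<exists>y\<in>P2. e = {x, y}"
  using assms unfolding bipartition_def by (simp, simp, meson)

lemma forcing_set_meets_kernel_support:
  fixes A :: "'v \<Rightarrow> 'v \<Rightarrow> 'f::field"
  assumes bp: "bipartition W E P1 P2" and W: "finite W"
    and A: "weighted_biadj E P1 P2 A"
    and kernel: "\<And>r. r \<in> P1 \<Longrightarrow> (\<Sum>q\<in>P2. A r q * u q) = 0"
    and M: "perfect_matching W E M" and S: "forcing_set W E M S"
    and q: "q \<in> P2" "u q \<noteq> 0"
  shows "\<exists>e\<in>S. \<exists>q\<in>e \<inter> P2. u q \<noteq> 0"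
proof -
  define Z where "Z = {q \<in> P2. u q \<noteq> 0}"
  note P = bipartitionD[OF bp]
  have finP2: "finite P2" using P(2) W by auto
  have "\<exists>r. {c, r} \<in> M \<and> r \<in> P1" if "c \<in> Z" for c
  proof -
    have c: "c \<in> P2" using that unfolding Z_def by simp
    then obtain e where e: "e \<in> M" "c \<in> e"
      using perfect_matching_covers[OF M] P(2) by blast
    then obtain x y where xy: "x \<in> P1" "y \<in> P2" "e = {x, y}"
      using P(3) perfect_matching_edge[OF M] by blast
    then have "c = y" using e(2) c P(1) by auto
    then show ?thesis using e xy by (auto simp: insert_commute)
  qed
  then obtain p where pM: "\<And>c. c \<in> Z \<Longrightarrow> {c, p c} \<in> M" and pP1: "\<And>c. c \<in> Z \<Longrightarrow> p c \<in> P1"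
    by metis
  \<comment> \<open>Row p c of A u = 0 contains the nonzero term A (p c) c * u c, so it contains another one.\<close>
  have "\<exists>q\<in>Z. q \<noteq> c \<and> {p c, q} \<in> E" if c: "c \<in> Z" for c
  proof -
    have cP2: "c \<in> P2" using c unfolding Z_def by simp
    have "{p c, c} \<in> E" using perfect_matching_edge[OF M pM[OF c]] by (simp add: insert_commute)
    then have "A (p c) c * u c \<noteq> 0" using A pP1[OF c] c unfolding weighted_biadj_def Z_def by auto
    moreover have "A (p c) c * u c + (\<Sum>q\<in>P2 - {c}. A (p c) q * u q) = 0"
      using sum.remove[OF finP2 cP2, of "\<lambda>q. A (p c) q * u q"] kernel[OF pP1[OF c]] by simp
    ultimately have "(\<Sum>q\<in>P2 - {c}. A (p c) q * u q) \<noteq> 0" by auto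
    then obtain q where "q \<in> P2 - {c}" "A (p c) q * u q \<noteq> 0" by (meson sum.neutral)
    then show ?thesis using A pP1[OF c] unfolding weighted_biadj_def Z_def by auto
  qed
  then obtain g where g: "\<And>c. c \<in> Z \<Longrightarrow> g c \<in> Z" "\<And>c. c \<in> Z \<Longrightarrow> g c \<noteq> c"
      "\<And>c. c \<in> Z \<Longrightarrow> {p c, g c} \<in> E"
    by metis
  have "finite Z" "Z \<noteq> {}" using finP2 q unfolding Z_def by auto
  moreover have "p c \<in> W - Z" if "c \<in> Z" for c using pP1[OF that] P(1,2) unfolding Z_def by auto
  ultimately have "\<exists>e\<in>S. e \<inter> Z \<noteq> {}"
    using forcing_set_meets_alternating_set[OF M S _ _ pM _ g] by blast
  then show ?thesis unfolding Z_def by blast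
qed

lemma bipartition_finite_edges:
  assumes "bipartition W E P1 P2" "finite W"
  shows "finite E"
proof -
  note P = bipartitionD[OF assms(1)]
  have "E \<subseteq> Pow W"
  proof
    fix e assume "e \<in> E"
    then obtain x y where "x \<in> P1" "y \<in> P2" "e = {x, y}" using P(3) by blast
    then show "e \<in> Pow W" using P(2) by auto
  qed
  then show ?thesis using assms(2) by (meson finite_Pow_iff finite_subset)
qed

lemma homogeneous_system_nontrivial_solution:
  fixes l :: "'i \<Rightarrow> 'x \<Rightarrow> 'f::field"
  assumes "finite I" "finite X" "card I < card X"
  shows "\<exists>w. (\<exists>x\<in>X. w x \<noteq> 0) \<and> (\<forall>i\<in>I. (\<Sum>x\<in>X. l i x * w x) = 0)"
  using assms
proof (induction I arbitrary: X l rule: finite_induct)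
  case empty
  then have "X \<noteq> {}" by auto
  then show ?case by (intro exI[of _ "\<lambda>_. 1"]) auto
next
  case (insert i I)
  show ?case
  proof (cases "\<forall>x\<in>X. l i x = 0")
    case True
    then show ?thesis
      using insert.IH[of X l] insert.prems insert.hyps by auto
  next
    case False
    then obtain x0 where x0: "x0 \<in> X" "l i x0 \<noteq> 0" by auto
    \<comment> \<open>Gaussian elimination: use equation i to eliminate the variable x0.\<close>
    define l' where "l' = (\<lambda>j x. l j x - l j x0 / l i x0 * l i x)"
    obtain w' where w': "\<exists>x\<in>X - {x0}. w' x \<noteq> 0"
        "\<forall>j\<in>I. (\<Sum>x\<in>X - {x0}. l' j x * w' x) = 0"
    proof (rule insert.IH[of "X - {x0}" l', THEN exE])
      show "finite (X - {x0})" using insert.prems by simp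
      show "card I < card (X - {x0})" using insert x0 by simp
    qed blast
    define T where "T = (\<Sum>x\<in>X - {x0}. l i x * w' x)"
    define w where "w = w'(x0 := - T / l i x0)"
    have split: "(\<Sum>x\<in>X. l j x * w x) = l j x0 * (- T / l i x0) + (\<Sum>x\<in>X - {x0}. l j x * w' x)"
      for j
    proof -
      have "(\<Sum>x\<in>X. l j x * w x) = l j x0 * w x0 + (\<Sum>x\<in>X - {x0}. l j x * w x)"
        using sum.remove[OF insert.prems(1) x0(1)] by simp
      also have "(\<Sum>x\<in>X - {x0}. l j x * w x) = (\<Sum>x\<in>X - {x0}. l j x * w' x)"
        by (rule sum.cong) (auto simp: w_def)
      finally show ?thesis by (simp add: w_def)
    qed
    have "(\<Sum>x\<in>X. l j x * w x) = 0" if "j \<in> insert i I" for j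
    proof (cases "j = i")
      case True
      then show ?thesis using split[of i] x0 T_def by simp
    next
      case False
      then have "(\<Sum>x\<in>X - {x0}. l' j x * w' x) = 0" using that w' by simp
      then have "(\<Sum>x\<in>X - {x0}. l j x * w' x) - l j x0 / l i x0 * T = 0"
        unfolding l'_def T_def by (simp add: algebra_simps sum_subtractf sum_distrib_left)
      then show ?thesis using split[of j] x0 by (simp add: field_simps)
    qed
    moreover have "\<exists>x\<in>X. w x \<noteq> 0" using w' by (auto simp: w_def)
    ultimately show ?thesis by blast
  qed
qed

lemma card_forcing_set_ge_kernel_dim:
  fixes A :: "'v \<Rightarrow> 'v \<Rightarrow> 'f::field" and l :: "'v \<Rightarrow> 'k \<Rightarrow> 'f"
  assumes bp: "bipartition W E P1 P2" and W: "finite W"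
    and A: "weighted_biadj E P1 P2 A"
    and K: "finite K"
    and kernel: "\<And>w r. r \<in> P1 \<Longrightarrow> (\<Sum>q\<in>P2. A r q * (\<Sum>k\<in>K. l q k * w k)) = 0"
    and inj: "\<And>w. \<forall>q\<in>P2. (\<Sum>k\<in>K. l q k * w k) = 0 \<Longrightarrow> \<forall>k\<in>K. w k = 0"
    and M: "perfect_matching W E M" and S: "forcing_set W E M S"
  shows "card K \<le> card S"
proof (rule ccontr)
  assume "\<not> card K \<le> card S"
  note P = bipartitionD[OF bp]
  have SE: "S \<subseteq> E" using S M unfolding forcing_set_def perfect_matching_def by blast
  then have finS: "finite S" using bipartition_finite_edges[OF bp W] finite_subset by blast
  define I where "I = (\<Union>e\<in>S. e \<inter> P2)"
  have "card I \<le> (\<Sum>e\<in>S. card (e \<inter> P2))" unfolding I_def using finS by (rule card_UN_le)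
  also have "\<dots> \<le> (\<Sum>e\<in>S. 1)"
  proof (rule sum_mono)
    fix e assume "e \<in> S"
    then obtain x y where "x \<in> P1" "y \<in> P2" "e = {x, y}" using P(3) SE by blast
    then have "e \<inter> P2 = {y}" using P(1) by auto
    then show "card (e \<inter> P2) \<le> 1" by simp
  qed
  finally have "card I < card K" using \<open>\<not> card K \<le> card S\<close> by simp
  moreover have "finite I" unfolding I_def using finS P(2) W by auto
  ultimately obtain w where w: "\<exists>k\<in>K. w k \<noteq> 0" "\<forall>q\<in>I. (\<Sum>k\<in>K. l q k * w k) = 0"
    using homogeneous_system_nontrivial_solution[OF _ K] by blast
  then obtain q where "q \<in> P2" "(\<Sum>k\<in>K. l q k * w k) \<noteq> 0" using inj by blast
  then obtain e q' where "e \<in> S" "q' \<in> e \<inter> P2" "(\<Sum>k\<in>K. l q' k * w k) \<noteq> 0"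
    using forcing_set_meets_kernel_support[OF bp W A kernel M S] by blast
  then show False using w(2) unfolding I_def by blast
qed

section \<open>Forcing numbers\<close>

lemma simple_graph_edge:
  "simple_graph V E \<Longrightarrow> e \<in> E \<Longrightarrow> \<exists>u v. e = {u, v} \<and> u \<noteq> v \<and> u \<in> V \<and> v \<in> V"
  unfolding simple_graph_def by meson

lemma simple_graph_finite_edges:
  assumes "simple_graph V E"
  shows "finite E"
proof -
  have "E \<subseteq> Pow V" using simple_graph_edge[OF assms] by auto
  then show ?thesis using assms unfolding simple_graph_def by (meson finite_Pow_iff finite_subset)
qed

lemma perfect_matching_subset_eq:
  assumes G: "simple_graph V E"
    and M: "perfect_matching V E M" and M': "perfect_matching V E M'" and "M \<subseteq> M'"
  shows "M = M'"
proof
  show "M' \<subseteq> M"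
  proof
    fix e assume e: "e \<in> M'"
    then obtain v where v: "v \<in> V" "v \<in> e"
      using simple_graph_edge[OF G perfect_matching_edge[OF M' e]] by auto
    then obtain e0 where "e0 \<in> M" "v \<in> e0" using perfect_matching_covers[OF M] by blast
    then have "e = e0" using perfect_matching_unique[OF M' v(1) e] v \<open>M \<subseteq> M'\<close> by blast
    then show "e \<in> M" using \<open>e0 \<in> M\<close> by simp
  qed
qed (fact \<open>M \<subseteq> M'\<close>)

lemma forcing_number_le:
  "forcing_set V E M S \<Longrightarrow> forcing_number V E M \<le> card S"
  unfolding forcing_number_def by (rule Least_le) blast

lemma forcing_number_ge:
  assumes "simple_graph V E" "perfect_matching V E M"
    and "\<And>S. forcing_set V E M S \<Longrightarrow> k \<le> card S"
  shows "k \<le> forcing_number V E M"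
proof -
  have "forcing_set V E M M"
    using perfect_matching_subset_eq[OF assms(1,2)] unfolding forcing_set_def by blast
  then have "\<exists>k S. forcing_set V E M S \<and> card S = k" by blast
  then have "\<exists>S. forcing_set V E M S \<and> card S = forcing_number V E M"
    unfolding forcing_number_def by (rule LeastI_ex)
  then obtain S where "forcing_set V E M S" "card S = forcing_number V E M" by blast
  then show ?thesis using assms(3) by metis
qed

lemma min_forcing_number_eqI:
  assumes G: "simple_graph V E"
    and M0: "perfect_matching V E M0" "forcing_set V E M0 S0"
    and lower: "\<And>M S. perfect_matching V E M \<Longrightarrow> forcing_set V E M S \<Longrightarrow> card S0 \<le> card S"
  shows "min_forcing_number V E = card S0"
proof -
  let ?F = "{forcing_number V E M | M. perfect_matching V E M}"
  have "?F \<subseteq> forcing_number V E ` Pow E" unfolding perfect_matching_def by blast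
  then have "finite ?F"
    using simple_graph_finite_edges[OF G] by (meson finite_Pow_iff finite_imageI finite_subset)
  moreover have ge: "card S0 \<le> forcing_number V E M" if "perfect_matching V E M" for M
    using forcing_number_ge[OF G that lower[OF that]] .
  moreover have "forcing_number V E M0 = card S0"
    using forcing_number_le[OF M0(2)] ge[OF M0(1)] by (rule antisym)
  then have "card S0 \<in> ?F" using M0(1) by (metis (mono_tags, lifting) mem_Collect_eq)
  ultimately show ?thesis unfolding min_forcing_number_def by (intro Min_eqI) auto
qed

section \<open>The prism G \<box> K2\<close>

abbreviation prism_E :: "'a set \<Rightarrow> 'a set set \<Rightarrow> ('a \<times> nat) set set" where
  "prism_E V E \<equiv> cart_prod_E V E K2_V K2_E"

lemma cart_prod_V_K2: "cart_prod_V V K2_V = V \<times> {0, 1}"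
  by (simp add: cart_prod_V_def K2_V_def)

lemma prism_edge_iff:
  "{(a, i), (b, j)} \<in> prism_E V E \<longleftrightarrow>
   a \<in> V \<and> b \<in> V \<and> i \<in> {0, 1} \<and> j \<in> {0, 1} \<and> (a = b \<and> i \<noteq> j \<or> i = j \<and> {a, b} \<in> E)"
proof
  assume "{(a, i), (b, j)} \<in> prism_E V E"
  then obtain g1 h1 g2 h2 where e: "{(a, i), (b, j)} = {(g1, h1), (g2, h2)}"
    and c: "g1 \<in> V" "g2 \<in> V" "h1 \<in> {0, 1}" "h2 \<in> {0, 1}"
      "g1 = g2 \<and> {h1, h2} = {0, 1} \<or> h1 = h2 \<and> {g1, g2} \<in> E"
    unfolding cart_prod_E_def K2_V_def K2_E_def by auto
  from e have "(a, i) = (g1, h1) \<and> (b, j) = (g2, h2) \<or> (a, i) = (g2, h2) \<and> (b, j) = (g1, h1)"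
    by (simp add: doubleton_eq_iff)
  then show "a \<in> V \<and> b \<in> V \<and> i \<in> {0, 1} \<and> j \<in> {0, 1} \<and> (a = b \<and> i \<noteq> j \<or> i = j \<and> {a, b} \<in> E)"
    using c by (auto simp: doubleton_eq_iff insert_commute)
next
  assume a: "a \<in> V \<and> b \<in> V \<and> i \<in> {0, 1} \<and> j \<in> {0, 1} \<and> (a = b \<and> i \<noteq> j \<or> i = j \<and> {a, b} \<in> E)"
  then have "a = b \<and> {i, j} \<in> K2_E \<or> i = j \<and> {a, b} \<in> E"
    unfolding K2_E_def by (auto simp: insert_commute)
  then show "{(a, i), (b, j)} \<in> prism_E V E"
    using a unfolding cart_prod_E_def K2_V_def by blast
qed

lemma prism_edgeE:
  assumes "e \<in> prism_E V E"
  obtains (rung) a where "a \<in> V" "e = {(a, 0), (a, 1)}"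
    | (copy) a b i where "{a, b} \<in> E" "a \<in> V" "b \<in> V" "i \<in> {0, 1}" "e = {(a, i), (b, i)}"
proof -
  obtain a i b j where e: "e = {(a, i), (b, j)}"
    using assms unfolding cart_prod_E_def by blast
  then have c: "a \<in> V" "b \<in> V" "i \<in> {0, 1}" "j \<in> {0, 1}" "a = b \<and> i \<noteq> j \<or> i = j \<and> {a, b} \<in> E"
    using assms unfolding e prism_edge_iff by simp_all
  then consider "a = b" "i \<noteq> j" | "i = j" "{a, b} \<in> E" by blast
  then show ?thesis
  proof cases
    case 1
    then have "e = {(a, 0), (a, 1)}" using c e by (auto simp: insert_commute)
    then show ?thesis using rung c by blast
  next
    case 2
    then show ?thesis using copy c e by blast
  qed
qed

lemma simple_graph_prism:
  assumes "simple_graph V E"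
  shows "simple_graph (V \<times> {0, 1}) (prism_E V E)"
  unfolding simple_graph_def
proof (intro conjI ballI)
  show "finite (V \<times> {0::nat, 1})" using assms unfolding simple_graph_def by simp
next
  fix e assume "e \<in> prism_E V E"
  then show "\<exists>u v. e = {u, v} \<and> u \<noteq> v \<and> u \<in> V \<times> {0, 1} \<and> v \<in> V \<times> {0, 1}"
  proof (cases rule: prism_edgeE)
    case (rung a)
    then show ?thesis by - (rule exI[of _ "(a, 0)"], rule exI[of _ "(a, 1)"], simp)
  next
    case (copy a b i)
    obtain u v where "{a, b} = {u, v}" "u \<noteq> v" using simple_graph_edge[OF assms copy(1)] by blast
    then have "a \<noteq> b" by (auto simp: doubleton_eq_iff)
    then show ?thesis using copy by - (rule exI[of _ "(a, i)"], rule exI[of _ "(b, i)"], simp)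
  qed
qed

lemma bipartition_prism:
  assumes "bipartition V E X Y"
  shows "bipartition (V \<times> {0, 1}) (prism_E V E) (X \<times> {0} \<union> Y \<times> {1}) (Y \<times> {0} \<union> X \<times> {1})"
  unfolding bipartition_def
proof (intro conjI ballI)
  note XY = bipartitionD[OF assms]
  show "(X \<times> {0} \<union> Y \<times> {1}) \<inter> (Y \<times> {0} \<union> X \<times> {1::nat}) = {}"
    "X \<times> {0} \<union> Y \<times> {1} \<union> (Y \<times> {0} \<union> X \<times> {1::nat}) = V \<times> {0, 1}"
    using XY by auto
  fix e assume "e \<in> prism_E V E"
  then show "\<exists>p q. p \<in> X \<times> {0} \<union> Y \<times> {1} \<and> q \<in> Y \<times> {0} \<union> X \<times> {1} \<and> e = {p, q}"
  proof (cases rule: prism_edgeE)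
    case (rung a)
    then show ?thesis using XY by (cases "a \<in> X") auto
  next
    case (copy a b i)
    obtain x y where xy: "x \<in> X" "y \<in> Y" "{a, b} = {x, y}" using XY(3)[OF copy(1)] by blast
    then have e: "e = {(x, i), (y, i)}" using copy(5) by (auto simp: doubleton_eq_iff)
    show ?thesis
    proof (cases "i = 0")
      case True
      then show ?thesis using e xy by - (rule exI[of _ "(x, 0)"], rule exI[of _ "(y, 0)"], simp)
    next
      case False
      then have "i = 1" using copy(4) by simp
      then show ?thesis
        using e xy by - (rule exI[of _ "(y, 1)"], rule exI[of _ "(x, 1)"], simp add: insert_commute)
    qed
  qed
qed

text \<open>With rows indexed by X \<times> {0} \<union> Y \<times> {1} and columns by Y \<times> {0} \<union> X \<times> {1},
  this is the block matrix [[B, I], [I, C^T]].\<close>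
definition prism_biadj :: "('a \<Rightarrow> 'a \<Rightarrow> 'f::field) \<Rightarrow> ('a \<Rightarrow> 'a \<Rightarrow> 'f) \<Rightarrow> 'a \<times> nat \<Rightarrow> 'a \<times> nat \<Rightarrow> 'f" where
  "prism_biadj B C = (\<lambda>(a, i) (b, j).
     if i \<noteq> j then (if a = b then 1 else 0) else if i = 0 then B a b else C b a)"

text \<open>The kernel vector (- C^T w, w) of the block matrix, as a linear function of w.\<close>
definition prism_kernel_coeff :: "('a \<Rightarrow> 'a \<Rightarrow> 'f::field) \<Rightarrow> 'a \<times> nat \<Rightarrow> 'a \<Rightarrow> 'f" where
  "prism_kernel_coeff C = (\<lambda>(a, j) x. if j = 0 then - C x a else if x = a then 1 else 0)"

lemma prism_kernel_vector_X1:
  assumes "finite X" "x \<in> X"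
  shows "(\<Sum>x'\<in>X. prism_kernel_coeff C (x, 1) x' * w x') = w x"
proof -
  have "(\<Sum>x'\<in>X. prism_kernel_coeff C (x, 1) x' * w x') = (\<Sum>x'\<in>X. if x' = x then w x' else 0)"
    by (rule sum.cong) (simp_all add: prism_kernel_coeff_def)
  then show ?thesis using assms by simp
qed

lemma weighted_biadj_prism:
  assumes bp: "bipartition V E X Y"
    and B: "weighted_biadj E X Y B" and C: "weighted_biadj E X Y C"
  shows "weighted_biadj (prism_E V E) (X \<times> {0} \<union> Y \<times> {1}) (Y \<times> {0} \<union> X \<times> {1}) (prism_biadj B C)"
  unfolding weighted_biadj_def
proof (intro ballI)
  note XY = bipartitionD[OF bp]
  fix p q assume p: "p \<in> X \<times> {0} \<union> Y \<times> {1::nat}" and q: "q \<in> Y \<times> {0} \<union> X \<times> {1::nat}"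
  show "prism_biadj B C p q \<noteq> 0 \<longleftrightarrow> {p, q} \<in> prism_E V E"
  proof (cases "snd p = snd q")
    case True
    then consider x y where "x \<in> X" "y \<in> Y" "p = (x, 0)" "q = (y, 0)"
      | x y where "x \<in> X" "y \<in> Y" "p = (y, 1)" "q = (x, 1)"
      using p q by auto
    then show ?thesis
    proof cases
      case 1
      then show ?thesis using B XY(2) by (auto simp: prism_biadj_def prism_edge_iff weighted_biadj_def)
    next
      case 2
      then show ?thesis using C XY(2)
        by (auto simp: prism_biadj_def prism_edge_iff weighted_biadj_def insert_commute)
    qed
  next
    case False
    then show ?thesis using p q XY(1,2) by (auto simp: prism_biadj_def prism_edge_iff)
  qed
qed

lemma sum_Times_0_Un_Times_1:
  fixes f :: "'a \<times> nat \<Rightarrow> 'f::comm_monoid_add"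
  assumes "finite X" "finite Y"
  shows "(\<Sum>q\<in>Y \<times> {0} \<union> X \<times> {1}. f q) = (\<Sum>y\<in>Y. f (y, 0)) + (\<Sum>x\<in>X. f (x, 1))"
proof -
  have "(\<Sum>q\<in>Y \<times> {0} \<union> X \<times> {1}. f q) = (\<Sum>q\<in>Y \<times> {0}. f q) + (\<Sum>q\<in>X \<times> {1}. f q)"
    using assms by (intro sum.union_disjoint) auto
  also have "\<dots> = (\<Sum>y\<in>Y. f (y, 0)) + (\<Sum>x\<in>X. f (x, 1))"
    by (simp add: Times_insert_right sum.reindex inj_on_def)
  finally show ?thesis .
qed

lemma prism_biadj_kernel:
  fixes B C :: "'a \<Rightarrow> 'a \<Rightarrow> 'f::field"
  assumes fin: "finite X" "finite Y"
    and BC: "\<forall>x\<in>X. \<forall>x'\<in>X. (\<Sum>y\<in>Y. B x y * C x' y) = (if x = x' then 1 else 0)"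
    and r: "r \<in> X \<times> {0} \<union> Y \<times> {1}"
  shows "(\<Sum>q\<in>Y \<times> {0} \<union> X \<times> {1}.
           prism_biadj B C r q * (\<Sum>x\<in>X. prism_kernel_coeff C q x * w x)) = 0"
proof -
  define u where "u q = (\<Sum>x\<in>X. prism_kernel_coeff C q x * w x)" for q
  have u0: "u (y, 0) = - (\<Sum>x\<in>X. C x y * w x)" for y
    by (simp add: u_def prism_kernel_coeff_def sum_negf)
  have u1: "u (x, 1) = w x" if "x \<in> X" for x
    unfolding u_def using fin(1) that by (rule prism_kernel_vector_X1)
  have split: "(\<Sum>q\<in>Y \<times> {0} \<union> X \<times> {1}. prism_biadj B C r q * u q)
      = (\<Sum>y\<in>Y. prism_biadj B C r (y, 0) * u (y, 0)) + (\<Sum>x\<in>X. prism_biadj B C r (x, 1) * u (x, 1))"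
    using fin by (rule sum_Times_0_Un_Times_1)
  from r consider (X0) x0 where "x0 \<in> X" "r = (x0, 0)" | (Y1) y0 where "y0 \<in> Y" "r = (y0, 1)"
    by blast
  then have "(\<Sum>q\<in>Y \<times> {0} \<union> X \<times> {1}. prism_biadj B C r q * u q) = 0"
  proof cases
    case X0
    \<comment> \<open>The row of [B, I] applied to (- C^T w, w) is - (B C^T w) x0 + w x0.\<close>
    have "(\<Sum>y\<in>Y. B x0 y * (\<Sum>x\<in>X. C x y * w x)) = (\<Sum>x\<in>X. (\<Sum>y\<in>Y. B x0 y * C x y) * w x)"
      by (simp add: sum_distrib_left sum_distrib_right mult.assoc sum.swap[of _ Y])
    also have "\<dots> = (\<Sum>x\<in>X. if x = x0 then w x else 0)"
      by (rule sum.cong) (use BC X0(1) in auto)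
    also have "\<dots> = w x0" using X0(1) fin(1) by simp
    finally have "(\<Sum>y\<in>Y. prism_biadj B C r (y, 0) * u (y, 0)) = - w x0"
      using X0(2) by (simp add: prism_biadj_def u0 sum_negf)
    moreover have "(\<Sum>x\<in>X. prism_biadj B C r (x, 1) * u (x, 1)) = (\<Sum>x\<in>X. if x = x0 then w x else 0)"
      by (rule sum.cong) (use X0 in \<open>auto simp: prism_biadj_def u1[unfolded One_nat_def]\<close>)
    ultimately show ?thesis using split X0(1) fin(1) by simp
  next
    case Y1
    have "(\<Sum>y\<in>Y. prism_biadj B C r (y, 0) * u (y, 0)) = (\<Sum>y\<in>Y. if y = y0 then u (y, 0) else 0)"
      by (rule sum.cong) (use Y1 in \<open>auto simp: prism_biadj_def\<close>)
    also have "\<dots> = - (\<Sum>x\<in>X. C x y0 * w x)" using Y1(1) fin(2) by (simp add: u0)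
    finally show ?thesis
      using split Y1 fin(1) by (simp add: prism_biadj_def u1[unfolded One_nat_def] cong: sum.cong)
  qed
  then show ?thesis by (simp add: u_def)
qed

lemma card_forcing_set_prism_ge:
  fixes B C :: "'a \<Rightarrow> 'a \<Rightarrow> 'f::field"
  assumes G: "simple_graph V E" and bp: "bipartition V E X Y"
    and B: "weighted_biadj E X Y B" and C: "weighted_biadj E X Y C"
    and BC: "\<forall>x\<in>X. \<forall>x'\<in>X. (\<Sum>y\<in>Y. B x y * C x' y) = (if x = x' then 1 else 0)"
    and M: "perfect_matching (V \<times> {0, 1}) (prism_E V E) M"
    and S: "forcing_set (V \<times> {0, 1}) (prism_E V E) M S"
  shows "card X \<le> card S"
proof -
  have "finite V" using G unfolding simple_graph_def by blast
  then have fin: "finite X" "finite Y" using bipartitionD(2)[OF bp] by auto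
  show ?thesis
  proof (rule card_forcing_set_ge_kernel_dim[OF bipartition_prism[OF bp] _ weighted_biadj_prism[OF bp B C]
        fin(1) prism_biadj_kernel[OF fin BC] _ M S])
    show "finite (V \<times> {0::nat, 1})" using \<open>finite V\<close> by simp
    fix w :: "'a \<Rightarrow> 'f"
    assume zero: "\<forall>q\<in>Y \<times> {0} \<union> X \<times> {1}. (\<Sum>x\<in>X. prism_kernel_coeff C q x * w x) = 0"
    show "\<forall>x\<in>X. w x = 0"
    proof
      fix x assume "x \<in> X"
      then have "(\<Sum>x'\<in>X. prism_kernel_coeff C (x, 1) x' * w x') = 0" using zero by blast
      then show "w x = 0" by (simp only: prism_kernel_vector_X1[OF fin(1) \<open>x \<in> X\<close>])
    qed
  qed
qed

definition rungs :: "'a set \<Rightarrow> ('a \<times> nat) set set" where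
  "rungs A = {{(a, 0), (a, 1)} | a. a \<in> A}"

lemma card_rungs: "card (rungs A) = card A"
proof -
  have "rungs A = (\<lambda>a. {(a, 0), (a, 1)}) ` A" unfolding rungs_def by blast
  moreover have "inj_on (\<lambda>a. {(a, 0::nat), (a, 1)}) A" by (auto simp: inj_on_def doubleton_eq_iff)
  ultimately show ?thesis by (simp add: card_image)
qed

lemma perfect_matching_rungs: "perfect_matching (V \<times> {0, 1}) (prism_E V E) (rungs V)"
  unfolding perfect_matching_def
proof (intro conjI ballI)
  show "rungs V \<subseteq> prism_E V E" unfolding rungs_def by (auto simp: prism_edge_iff)
next
  fix p assume "p \<in> V \<times> {0::nat, 1}"
  then obtain a i where "p = (a, i)" "a \<in> V" "i \<in> {0, 1}" by blast
  then show "\<exists>!e. e \<in> rungs V \<and> p \<in> e"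
    unfolding rungs_def by (intro ex1I[of _ "{(a, 0), (a, 1)}"]) auto
qed

lemma forcing_set_rungs:
  assumes G: "simple_graph V E" and bp: "bipartition V E X Y"
  shows "forcing_set (V \<times> {0, 1}) (prism_E V E) (rungs V) (rungs X)"
  unfolding forcing_set_def
proof (intro conjI allI impI)
  note XY = bipartitionD[OF bp]
  show "rungs X \<subseteq> rungs V" using XY unfolding rungs_def by blast
  fix M assume M: "perfect_matching (V \<times> {0, 1}) (prism_E V E) M \<and> rungs X \<subseteq> M"
  have "M \<subseteq> rungs V"
  proof
    fix e assume "e \<in> M"
    then have "e \<in> prism_E V E" using M unfolding perfect_matching_def by blast
    then show "e \<in> rungs V"
    proof (cases rule: prism_edgeE)
      case (rung a)
      then show ?thesis unfolding rungs_def by auto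
    next
      case (copy a b i)
      obtain x y where xy: "x \<in> X" "y \<in> Y" "{a, b} = {x, y}" using XY(3)[OF copy(1)] by blast
      then have x: "(x, i) \<in> e" using copy(5) by (auto simp: doubleton_eq_iff)
      have "{(x, 0), (x, 1)} \<in> M" using M xy(1) unfolding rungs_def by blast
      moreover have "(x, i) \<in> V \<times> {0, 1}" using xy(1) copy(4) XY(2) by blast
      moreover have "(x, i) \<in> {(x, 0), (x, 1)}" using copy(4) by blast
      ultimately have "e = {(x, 0), (x, 1)}"
        using perfect_matching_unique[of _ _ M "(x, i)"] M \<open>e \<in> M\<close> x by blast
      then have "(x, 0) \<in> e" "(x, 1) \<in> e" by simp_all
      then have False using copy(5) by auto
      then show ?thesis ..
    qed
  qed
  then show "M = rungs V"
    using perfect_matching_subset_eq[OF simple_graph_prism[OF G] _ perfect_matching_rungs] M by blast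
qed

theorem theorem3p1:
  fixes V :: "'a set" and E :: "'a set set" and X Y :: "'a set"
  assumes "simple_graph V E"
    and "bipartition V E X Y"
    and "card X \<le> card Y"
    and "R_F E X Y \<noteq> ({} :: ('a \<Rightarrow> 'a \<Rightarrow> 'f::field) set)"
  shows "min_forcing_number (cart_prod_V V K2_V) (cart_prod_E V E K2_V K2_E) = card X"
proof -
  obtain B C :: "'a \<Rightarrow> 'a \<Rightarrow> 'f" where B: "weighted_biadj E X Y B" and C: "weighted_biadj E X Y C"
    and BC: "\<forall>x\<in>X. \<forall>x'\<in>X. (\<Sum>y\<in>Y. B x y * C x' y) = (if x = x' then 1 else 0)"
    using assms(4) unfolding R_F_def by blast
  have "min_forcing_number (V \<times> {0, 1}) (prism_E V E) = card (rungs X)"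
  proof (rule min_forcing_number_eqI[OF simple_graph_prism[OF assms(1)] perfect_matching_rungs
        forcing_set_rungs[OF assms(1,2)]])
    fix M S
    assume "perfect_matching (V \<times> {0, 1}) (prism_E V E) M"
      and "forcing_set (V \<times> {0, 1}) (prism_E V E) M S"
    then show "card (rungs X) \<le> card S"
      unfolding card_rungs by (rule card_forcing_set_prism_ge[OF assms(1,2) B C BC])
  qed
  then show ?thesis by (simp add: cart_prod_V_K2 card_rungs)
qed

end
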